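(* Let $X,Y\in\mathbb R^p$ be jointly multivariate Normal with mean zero, $\operatorname{Var}(X)=x\,I_p$, $\operatorname{Var}(Y)=y\,I_p$, $\operatorname{Cov}(X,Y)=z\,I_p$, where $x,y>0$. Then \[\mathrm E\big[Y^{\arg\max_k X^k}\big]=\frac{z}{x}\,\mathrm E[X^{(1)}]=\frac{z}{\sqrt x}\,\mathrm E\big[\mathcal N(\mathbf 0,I_p)^{(1)}\big]=\frac{z}{\sqrt{xy}}\,\mathrm E[Y^{(1)}].\]
   Context: For a vector $v$, $v^k$ is its $k$-th coordinate and $v^{(1)}=\max_k v^k$ its largest coordinate; $\mathcal N(\mathbf 0,I_p)^{(1)}$ denotes the maximum coordinate of a standard Normal vector in $\mathbb R^p$. *)

theory Defs
  imports "HOL-Probability.Probability"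
begin

definition normal_law :: "real \<Rightarrow> real \<Rightarrow> real measure" where
  "normal_law m v = (if v = 0 then return borel m
                     else density lborel (normal_density m (sqrt v)))"

text \<open>(X,Y) jointly Gaussian in R^p x R^p, mean zero, Var X = x I, Var Y = y I, Cov(X,Y) = z I:
  every linear combination a.X + b.Y is centred normal with the induced variance.\<close>
definition jointly_normal_cov ::
  "'s measure \<Rightarrow> ('s \<Rightarrow> real^'p) \<Rightarrow> ('s \<Rightarrow> real^'p) \<Rightarrow> real \<Rightarrow> real \<Rightarrow> real \<Rightarrow> bool" where
  "jointly_normal_cov M X Y x y z \<longleftrightarrow>
     X \<in> borel_measurable M \<and> Y \<in> borel_measurable M \<and>
     (\<forall>a b. distr M borel (\<lambda>\<omega>. a \<bullet> X \<omega> + b \<bullet> Y \<omega>)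
            = normal_law 0 (x * (a \<bullet> a) + 2 * z * (a \<bullet> b) + y * (b \<bullet> b)))"

definition vmax :: "real^'p \<Rightarrow> real" where
  "vmax v = Max (range (\<lambda>k. v $ k))"

definition vargmax :: "real^'p \<Rightarrow> 'p" where
  "vargmax v = (SOME k. \<forall>j. v $ j \<le> v $ k)"

definition std_normal_vec :: "(real^'p) measure" where
  "std_normal_vec = density lborel (\<lambda>v. \<Prod>k\<in>UNIV. std_normal_density (v $ k))"

end

theory Submission
  imports Defs
begin

text \<open>Write \<open>Y = (z/x) X + W\<close>. The Gaussian vector \<open>W\<close> is uncorrelated with, hence independent
  of, \<open>X\<close>, and symmetric, so \<open>(X, Y)\<close> and \<open>(X, (2z/x) X - Y)\<close> have the same law. Reading off
  the coordinate of the second component at the argmax of the first under both laws gives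
  \<open>E[Y^(argmax X)] = (2z/x) E[X^(1)] - E[Y^(argmax X)]\<close>. The other equalities are scaling: an isotropic
  centred Gaussian vector of variance \<open>c\<close> has the law of \<open>sqrt c\<close> times a standard one.

  Both identities of laws are checked on characteristic functions. HOL-Probability only has the
  univariate Levy uniqueness theorem, so uniqueness on a Euclidean space is proved by Gaussian
  smoothing: since the Gaussian is its own Fourier transform, \<open>\<integral>\<integral> g (v + s w) \<phi>(w) dw d\<mu>(v)\<close>
  only depends on the characteristic function of \<open>\<mu>\<close>, and it tends to \<open>\<integral> g d\<mu>\<close> as \<open>s \<rightarrow> 0\<close>.\<close>

section \<open>The standard Gaussian density on a Euclidean space\<close>

definition std_normal_pdf :: "'a::euclidean_space \<Rightarrow> real" where
  "std_normal_pdf w = (\<Prod>b\<in>Basis. std_normal_density (w \<bullet> b))"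

lemma std_normal_pdf_nonneg: "0 \<le> std_normal_pdf w"
  unfolding std_normal_pdf_def by (intro prod_nonneg) auto

lemma borel_measurable_std_normal_pdf [measurable]: "std_normal_pdf \<in> borel_measurable borel"
  unfolding std_normal_pdf_def by measurable

lemma std_normal_pdf_eq_exp:
  "std_normal_pdf (x::'a::euclidean_space) = (1 / sqrt (2 * pi)) ^ DIM('a) * exp (- (x \<bullet> x) / 2)"
proof -
  have "std_normal_pdf x = (\<Prod>b\<in>(Basis::'a set). (1 / sqrt (2 * pi)) * exp (- ((x \<bullet> b)\<^sup>2) / 2))"
    by (simp add: std_normal_pdf_def std_normal_density_def)
  also have "\<dots> = (1 / sqrt (2 * pi)) ^ DIM('a) * (\<Prod>b\<in>(Basis::'a set). exp (- ((x \<bullet> b)\<^sup>2) / 2))"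
    by (subst prod.distrib) simp
  also have "(\<Prod>b\<in>(Basis::'a set). exp (- ((x \<bullet> b)\<^sup>2) / 2)) = exp (\<Sum>b\<in>(Basis::'a set). - ((x \<bullet> b)\<^sup>2) / 2)"
    by (simp add: exp_sum)
  also have "(\<Sum>b\<in>(Basis::'a set). - ((x \<bullet> b)\<^sup>2) / 2) = - (x \<bullet> x) / 2"
    by (simp add: euclidean_inner[of x x] sum_negf sum_divide_distrib power2_eq_square)
  finally show ?thesis .
qed

lemma std_normal_pdf_minus: "std_normal_pdf (- x) = std_normal_pdf (x::'a::euclidean_space)"
  by (simp add: std_normal_pdf_eq_exp)

lemma std_normal_pdf_le_1: "std_normal_pdf (x::'a::euclidean_space) \<le> 1"
proof -
  have "1 \<le> sqrt (2 * pi)"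
    using pi_gt3 by (simp add: real_le_rsqrt)
  then have "(1 / sqrt (2 * pi)) ^ DIM('a) \<le> 1"
    by (intro power_le_one) simp_all
  then show ?thesis
    unfolding std_normal_pdf_eq_exp by (rule mult_le_one) auto
qed

lemma nn_integral_std_normal_pdf:
  "(\<integral>\<^sup>+w. ennreal (std_normal_pdf w) \<partial>(lborel::'a::euclidean_space measure)) = 1"
proof -
  have "(\<integral>\<^sup>+w. ennreal (std_normal_pdf w) \<partial>(lborel::'a measure))
      = (\<integral>\<^sup>+w. (\<Prod>b\<in>Basis. ennreal (std_normal_density (w \<bullet> b))) \<partial>(lborel::'a measure))"
    unfolding std_normal_pdf_def by (simp add: prod_ennreal)
  also have "\<dots> = (\<Prod>b\<in>(Basis::'a set). (\<integral>\<^sup>+x. ennreal (std_normal_density x) \<partial>lborel))"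
    by (rule nn_integral_lborel_prod) auto
  also have "\<dots> = 1"
    by (simp add: nn_integral_eq_integral)
  finally show ?thesis .
qed

lemma integrable_std_normal_pdf: "integrable (lborel::'a::euclidean_space measure) std_normal_pdf"
  by (rule integrableI_nonneg) (auto simp: std_normal_pdf_nonneg nn_integral_std_normal_pdf)

lemma integral_std_normal_pdf: "(\<integral>w. std_normal_pdf w \<partial>(lborel::'a::euclidean_space measure)) = 1"
proof -
  have "ennreal (\<integral>w. std_normal_pdf w \<partial>(lborel::'a measure)) = 1"
    using nn_integral_std_normal_pdf[where 'a='a] nn_integral_eq_integral[OF integrable_std_normal_pdf[where 'a='a]]
    by (simp add: std_normal_pdf_nonneg)
  then show ?thesis by simp
qed

lemma integral_std_normal_density_iexp:
  "(\<integral>x. std_normal_density x *\<^sub>R iexp (t * x) \<partial>lborel) = complex_of_real (exp (- (t\<^sup>2) / 2))"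
proof -
  have "char std_normal_distribution t = complex_of_real (exp (- (t\<^sup>2) / 2))"
    by (simp add: char_std_normal_distribution)
  then show ?thesis
    unfolding char_def by (subst (asm) integral_density) auto
qed

lemma fourier_std_normal_pdf:
  fixes u :: "'a::euclidean_space"
  shows "(\<integral>w. std_normal_pdf w *\<^sub>R iexp (u \<bullet> w) \<partial>lborel) = complex_of_real (exp (- (u \<bullet> u) / 2))"
proof -
  interpret P: product_sigma_finite "\<lambda>_::'a. lborel::real measure" ..
  let ?T = "\<lambda>f. \<Sum>b\<in>(Basis::'a set). f b *\<^sub>R b"
  have "std_normal_pdf (?T f) *\<^sub>R iexp (u \<bullet> ?T f)
      = (\<Prod>b\<in>Basis. std_normal_density (f b) *\<^sub>R iexp ((u \<bullet> b) * f b))" for f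
  proof -
    have "iexp (u \<bullet> ?T f) = (\<Prod>b\<in>Basis. iexp ((u \<bullet> b) * f b))"
      by (simp add: inner_sum_right sum_distrib_left exp_sum mult.commute)
    moreover have "std_normal_pdf (?T f) = (\<Prod>b\<in>Basis. std_normal_density (f b))"
      unfolding std_normal_pdf_def
      by (intro prod.cong refl) (simp add: inner_sum_left inner_Basis if_distrib cong: if_cong)
    ultimately show ?thesis
      by (simp add: scaleR_conv_of_real prod.distrib of_real_prod)
  qed
  then have "(\<integral>w. std_normal_pdf w *\<^sub>R iexp (u \<bullet> w) \<partial>lborel)
      = (\<integral>f. (\<Prod>b\<in>(Basis::'a set). std_normal_density (f b) *\<^sub>R iexp ((u \<bullet> b) * f b))
           \<partial>(\<Pi>\<^sub>M b\<in>(Basis::'a set). lborel))"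
    by (subst lborel_eq) (simp add: integral_distr)
  also have "\<dots> = (\<Prod>b\<in>(Basis::'a set). (\<integral>x. std_normal_density x *\<^sub>R iexp ((u \<bullet> b) * x) \<partial>lborel))"
  proof (rule P.product_integral_prod)
    fix b :: 'a
    show "integrable lborel (\<lambda>x. std_normal_density x *\<^sub>R iexp ((u \<bullet> b) * x))"
      by (rule Bochner_Integration.integrable_bound[where f="std_normal_density"]) (auto simp: norm_mult)
  qed simp
  also have "\<dots> = (\<Prod>b\<in>(Basis::'a set). complex_of_real (exp (- ((u \<bullet> b)\<^sup>2) / 2)))"
    by (simp only: integral_std_normal_density_iexp)
  also have "\<dots> = complex_of_real (exp (- (u \<bullet> u) / 2))"
    by (simp add: of_real_prod[symmetric] exp_sum[symmetric]
        euclidean_inner[of u u] sum_divide_distrib[symmetric] sum_negf power2_eq_square)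
  finally show ?thesis .
qed

lemma std_normal_pdf_eq_fourier:
  fixes x :: "'a::euclidean_space"
  shows "complex_of_real (std_normal_pdf x)
    = complex_of_real ((1 / sqrt (2 * pi)) ^ DIM('a)) * (\<integral>w. std_normal_pdf w *\<^sub>R iexp (x \<bullet> w) \<partial>lborel)"
  unfolding fourier_std_normal_pdf by (subst std_normal_pdf_eq_exp) simp

lemma nn_integral_lborel_affine:
  fixes h :: "'a::euclidean_space \<Rightarrow> ennreal"
  assumes [measurable]: "h \<in> borel_measurable borel" and "s > 0"
  shows "(\<integral>\<^sup>+c. h c \<partial>lborel) = ennreal (s ^ DIM('a)) * (\<integral>\<^sup>+x. h (v + s *\<^sub>R x) \<partial>lborel)"
proof -
  have "(\<integral>\<^sup>+c. h c \<partial>lborel)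
      = (\<integral>\<^sup>+c. h c \<partial>density (distr lborel borel (\<lambda>x. v + s *\<^sub>R x)) (\<lambda>_. \<bar>s\<bar> ^ DIM('a)))"
    using lborel_affine[of s v] \<open>s > 0\<close> by simp
  also have "\<dots> = (\<integral>\<^sup>+x. ennreal (s ^ DIM('a)) * h (v + s *\<^sub>R x) \<partial>lborel)"
    using \<open>s > 0\<close> by (simp add: nn_integral_density nn_integral_distr)
  also have "\<dots> = ennreal (s ^ DIM('a)) * (\<integral>\<^sup>+x. h (v + s *\<^sub>R x) \<partial>lborel)"
    by (rule nn_integral_cmult) measurable
  finally show ?thesis .
qed

section \<open>Uniqueness of multivariate characteristic functions\<close>

definition char_vec :: "'a::euclidean_space measure \<Rightarrow> 'a \<Rightarrow> complex" where
  "char_vec \<mu> t = (\<integral>v. iexp (t \<bullet> v) \<partial>\<mu>)"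

lemma integral_gauss_kernel_eq_char_vec:
  fixes \<mu> :: "'a::euclidean_space measure"
  assumes "finite_measure \<mu>" and sets_\<mu>: "sets \<mu> = sets borel" and "s > 0"
  shows "complex_of_real (\<integral>v. std_normal_pdf ((1/s) *\<^sub>R (v - c)) \<partial>\<mu>)
    = complex_of_real ((1 / sqrt (2 * pi)) ^ DIM('a)) *
      (\<integral>w. std_normal_pdf w *\<^sub>R (char_vec \<mu> ((1/s) *\<^sub>R w) * iexp (- (c \<bullet> w) / s)) \<partial>lborel)"
proof -
  interpret finite_measure \<mu> by fact
  interpret PS: pair_sigma_finite \<mu> "lborel :: 'a measure" ..
  have [measurable_cong]: "sets \<mu> = sets borel" by (rule sets_\<mu>)
  let ?C = "complex_of_real ((1 / sqrt (2 * pi)) ^ DIM('a))"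
  let ?F = "\<lambda>v w. std_normal_pdf w *\<^sub>R (iexp (((1/s) *\<^sub>R w) \<bullet> v) * iexp (- (c \<bullet> w) / s))"
  have inner_eq: "((1/s) *\<^sub>R (v - c)) \<bullet> w = ((1/s) *\<^sub>R w) \<bullet> v + (- (c \<bullet> w) / s)" for v w :: 'a
    by (simp add: inner_diff_right inner_commute[of w] inner_diff_left diff_divide_distrib)
  have kernel: "complex_of_real (std_normal_pdf ((1/s) *\<^sub>R (v - c))) = ?C * (\<integral>w. ?F v w \<partial>lborel)" for v
    by (simp only: std_normal_pdf_eq_fourier inner_eq of_real_add distrib_left exp_add)
  have norm_F: "norm (?F v w) = std_normal_pdf w" for v w
    by (simp add: norm_mult std_normal_pdf_nonneg)
  have "integrable (\<mu> \<Otimes>\<^sub>M lborel) (\<lambda>p. ?F (fst p) (snd p))"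
  proof (rule PS.Fubini_integrable)
    show "integrable \<mu> (\<lambda>x. \<integral>y. norm (?F (fst (x, y)) (snd (x, y))) \<partial>lborel)"
      by (simp only: norm_F fst_conv snd_conv integral_std_normal_pdf) simp
    have "integrable lborel (\<lambda>y. ?F x y)" for x
    proof (rule Bochner_Integration.integrable_bound[OF integrable_std_normal_pdf])
      show "AE y in lborel. norm (?F x y) \<le> norm (std_normal_pdf y)"
        by (intro AE_I2) (simp only: norm_F std_normal_pdf_nonneg real_norm_def abs_of_nonneg order_refl)
    qed measurable
    then show "AE x in \<mu>. integrable lborel (\<lambda>y. ?F (fst (x, y)) (snd (x, y)))"
      by simp
  qed measurable
  then have Fubini: "(\<integral>v. (\<integral>w. ?F v w \<partial>lborel) \<partial>\<mu>) = (\<integral>w. (\<integral>v. ?F v w \<partial>\<mu>) \<partial>lborel)"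
    using PS.Fubini_integral[of ?F] by (simp add: case_prod_beta')
  have "complex_of_real (\<integral>v. std_normal_pdf ((1/s) *\<^sub>R (v - c)) \<partial>\<mu>)
      = (\<integral>v. ?C * (\<integral>w. ?F v w \<partial>lborel) \<partial>\<mu>)"
    by (simp only: kernel integral_complex_of_real[symmetric])
  also have "\<dots> = ?C * (\<integral>w. (\<integral>v. ?F v w \<partial>\<mu>) \<partial>lborel)"
    by (simp only: integral_mult_right_zero Fubini)
  finally show ?thesis
    unfolding char_vec_def by simp
qed

lemma integral_gauss_kernel_eq_if_char_vec_eq:
  fixes \<mu> \<nu> :: "'a::euclidean_space measure"
  assumes "finite_measure \<mu>" "sets \<mu> = sets borel" "finite_measure \<nu>" "sets \<nu> = sets borel"
    and "char_vec \<mu> = char_vec \<nu>" and "s > 0"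
  shows "(\<integral>v. std_normal_pdf ((1/s) *\<^sub>R (v - c)) \<partial>\<mu>) = (\<integral>v. std_normal_pdf ((1/s) *\<^sub>R (v - c)) \<partial>\<nu>)"
  using integral_gauss_kernel_eq_char_vec[OF assms(1,2,6), of c]
    integral_gauss_kernel_eq_char_vec[OF assms(3,4,6), of c] assms(5)
  by (metis of_real_eq_iff)

definition gauss_smoothing :: "('a::euclidean_space \<Rightarrow> real) \<Rightarrow> real \<Rightarrow> 'a \<Rightarrow> real" where
  "gauss_smoothing g s v = (\<integral>w. g (v + s *\<^sub>R w) * std_normal_pdf w \<partial>lborel)"

lemma borel_measurable_gauss_smoothing [measurable]:
  assumes [measurable]: "g \<in> borel_measurable borel"
  shows "gauss_smoothing g s \<in> borel_measurable borel"
  unfolding gauss_smoothing_def by measurable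

context
  fixes g :: "'a::euclidean_space \<Rightarrow> real" and B :: real
  assumes g_nonneg: "\<And>v. 0 \<le> g v" and g_le: "\<And>v. g v \<le> B"
begin

lemma integrable_gauss_smoothing_integrand:
  assumes [measurable]: "g \<in> borel_measurable borel"
  shows "integrable lborel (\<lambda>w. g (v + s *\<^sub>R w) * std_normal_pdf w)"
proof (rule Bochner_Integration.integrable_bound[where f="\<lambda>w. B * std_normal_pdf w"])
  show "integrable lborel (\<lambda>w. B * std_normal_pdf w)"
    using integrable_std_normal_pdf by blast
  show "AE w in lborel. norm (g (v + s *\<^sub>R w) * std_normal_pdf w) \<le> norm (B * std_normal_pdf w)"
    using g_nonneg g_le std_normal_pdf_nonneg
    by (intro AE_I2) (auto simp: abs_mult intro!: mult_right_mono order_trans[OF g_le abs_ge_self])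
qed measurable

lemma gauss_smoothing_nonneg: "0 \<le> gauss_smoothing g s v"
  unfolding gauss_smoothing_def
  using g_nonneg std_normal_pdf_nonneg by (intro integral_nonneg_AE AE_I2 mult_nonneg_nonneg) auto

lemma gauss_smoothing_le:
  assumes [measurable]: "g \<in> borel_measurable borel"
  shows "gauss_smoothing g s v \<le> B"
proof -
  have "gauss_smoothing g s v \<le> (\<integral>w. B * std_normal_pdf w \<partial>(lborel::'a measure))"
    unfolding gauss_smoothing_def
    by (rule Bochner_Integration.integral_mono[OF integrable_gauss_smoothing_integrand
          integrable_mult_right[OF integrable_std_normal_pdf]])
       (auto intro!: mult_right_mono g_nonneg g_le std_normal_pdf_nonneg)
  then show ?thesis
    by (simp add: integral_std_normal_pdf)
qed

lemma gauss_smoothing_tendsto: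
  assumes g_cont: "continuous_on UNIV g"
  shows "(\<lambda>n. gauss_smoothing g (inverse (Suc n)) v) \<longlonglongrightarrow> g v"
proof -
  have [measurable]: "g \<in> borel_measurable borel"
    by (rule borel_measurable_continuous_onI[OF g_cont])
  have "(\<lambda>n. \<integral>w. g (v + inverse (Suc n) *\<^sub>R w) * std_normal_pdf w \<partial>lborel)
      \<longlonglongrightarrow> (\<integral>w. g v * std_normal_pdf w \<partial>(lborel::'a measure))"
  proof (rule integral_dominated_convergence[where w="\<lambda>w. B * std_normal_pdf w"])
    show "integrable lborel (\<lambda>w. B * std_normal_pdf w)"
      using integrable_std_normal_pdf by blast
    show "AE w in lborel. (\<lambda>n. g (v + inverse (Suc n) *\<^sub>R w) * std_normal_pdf w) \<longlonglongrightarrow> g v * std_normal_pdf w"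
    proof (rule AE_I2)
      fix w :: 'a
      have "(\<lambda>n. v + inverse (Suc n) *\<^sub>R w) \<longlonglongrightarrow> v + 0 *\<^sub>R w"
        by (intro tendsto_intros LIMSEQ_inverse_real_of_nat)
      then have "(\<lambda>n. g (v + inverse (Suc n) *\<^sub>R w)) \<longlonglongrightarrow> g v"
        using g_cont by (auto intro: isCont_tendsto_compose simp: continuous_on_eq_continuous_at)
      then show "(\<lambda>n. g (v + inverse (Suc n) *\<^sub>R w) * std_normal_pdf w) \<longlonglongrightarrow> g v * std_normal_pdf w"
        by (intro tendsto_intros)
    qed
    show "AE w in lborel. norm (g (v + inverse (Suc n) *\<^sub>R w) * std_normal_pdf w) \<le> B * std_normal_pdf w" for n
      by (intro AE_I2) (simp add: abs_mult abs_of_nonneg[OF g_nonneg] abs_of_nonneg[OF std_normal_pdf_nonneg]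
          mult_right_mono g_le std_normal_pdf_nonneg)
  qed measurable
  then show ?thesis
    by (simp add: gauss_smoothing_def integral_std_normal_pdf)
qed

text \<open>After the substitution \<open>c = v + s w\<close>, Tonelli moves the integral over \<open>\<rho>\<close> onto the
  Gaussian kernel, whose integral against \<open>\<rho>\<close> only depends on \<open>char_vec \<rho>\<close>.\<close>
lemma integral_gauss_smoothing_eq_kernel:
  fixes \<rho> :: "'a measure"
  assumes "finite_measure \<rho>" and sets_\<rho>: "sets \<rho> = sets borel" and "s > 0"
    and [measurable]: "g \<in> borel_measurable borel"
  shows "ennreal (s ^ DIM('a)) * ennreal (\<integral>v. gauss_smoothing g s v \<partial>\<rho>)
       = (\<integral>\<^sup>+c. ennreal (g c) * ennreal (\<integral>v. std_normal_pdf ((1/s) *\<^sub>R (v - c)) \<partial>\<rho>) \<partial>lborel)"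
proof -
  interpret finite_measure \<rho> by fact
  interpret PS: pair_sigma_finite \<rho> "lborel :: 'a measure" ..
  have [measurable_cong]: "sets \<rho> = sets borel" by (rule sets_\<rho>)
  let ?K = "\<lambda>v c. std_normal_pdf ((1/s) *\<^sub>R (v - c))"
  have substitution: "ennreal (s ^ DIM('a)) * ennreal (gauss_smoothing g s v)
      = (\<integral>\<^sup>+c. ennreal (g c * ?K v c) \<partial>lborel)" for v
  proof -
    have "(\<integral>\<^sup>+c. ennreal (g c * ?K v c) \<partial>lborel)
        = ennreal (s ^ DIM('a)) * (\<integral>\<^sup>+x. ennreal (g (v + s *\<^sub>R x) * ?K v (v + s *\<^sub>R x)) \<partial>lborel)"
      by (rule nn_integral_lborel_affine[OF _ \<open>s > 0\<close>]) measurable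
    also have "(\<lambda>x. ?K v (v + s *\<^sub>R x)) = std_normal_pdf"
      using \<open>s > 0\<close> by (auto simp: std_normal_pdf_minus)
    also have "(\<integral>\<^sup>+x. ennreal (g (v + s *\<^sub>R x) * std_normal_pdf x) \<partial>lborel) = ennreal (gauss_smoothing g s v)"
      unfolding gauss_smoothing_def
      using integrable_gauss_smoothing_integrand g_nonneg std_normal_pdf_nonneg
      by (subst nn_integral_eq_integral) (auto intro!: AE_I2 mult_nonneg_nonneg)
    finally show ?thesis ..
  qed
  have kernel: "(\<integral>\<^sup>+v. ennreal (g c * ?K v c) \<partial>\<rho>) = ennreal (g c) * ennreal (\<integral>v. ?K v c \<partial>\<rho>)" for c
  proof -
    have "integrable \<rho> (\<lambda>v. ?K v c)"
      by (rule integrable_const_bound[where B=1]) (auto simp: std_normal_pdf_nonneg std_normal_pdf_le_1)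
    then have "(\<integral>\<^sup>+v. ennreal (?K v c) \<partial>\<rho>) = ennreal (\<integral>v. ?K v c \<partial>\<rho>)"
      by (subst nn_integral_eq_integral) (auto simp: std_normal_pdf_nonneg)
    then show ?thesis
      by (simp add: ennreal_mult g_nonneg std_normal_pdf_nonneg nn_integral_cmult)
  qed
  have "integrable \<rho> (gauss_smoothing g s)"
    by (rule integrable_const_bound[where B=B]) (auto simp: gauss_smoothing_nonneg gauss_smoothing_le)
  then have "ennreal (s ^ DIM('a)) * ennreal (\<integral>v. gauss_smoothing g s v \<partial>\<rho>)
      = ennreal (s ^ DIM('a)) * (\<integral>\<^sup>+v. ennreal (gauss_smoothing g s v) \<partial>\<rho>)"
    by (subst nn_integral_eq_integral) (auto simp: gauss_smoothing_nonneg)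
  also have "\<dots> = (\<integral>\<^sup>+v. ennreal (s ^ DIM('a)) * ennreal (gauss_smoothing g s v) \<partial>\<rho>)"
    by (rule nn_integral_cmult[symmetric]) measurable
  also have "\<dots> = (\<integral>\<^sup>+v. (\<integral>\<^sup>+c. ennreal (g c * ?K v c) \<partial>lborel) \<partial>\<rho>)"
    by (simp only: substitution)
  also have "\<dots> = (\<integral>\<^sup>+c. (\<integral>\<^sup>+v. ennreal (g c * ?K v c) \<partial>\<rho>) \<partial>lborel)"
    by (rule PS.Fubini'[symmetric]) measurable
  finally show ?thesis
    by (simp only: kernel)
qed

lemma integral_gauss_smoothing_tendsto:
  fixes \<rho> :: "'a measure"
  assumes "finite_measure \<rho>" and sets_\<rho>: "sets \<rho> = sets borel" and g_cont: "continuous_on UNIV g"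
  shows "(\<lambda>n. \<integral>v. gauss_smoothing g (inverse (Suc n)) v \<partial>\<rho>) \<longlonglongrightarrow> (\<integral>v. g v \<partial>\<rho>)"
proof -
  interpret finite_measure \<rho> by fact
  have [measurable_cong]: "sets \<rho> = sets borel" by (rule sets_\<rho>)
  have [measurable]: "g \<in> borel_measurable borel"
    by (rule borel_measurable_continuous_onI[OF g_cont])
  show ?thesis
  proof (rule integral_dominated_convergence[where w="\<lambda>_. B"])
    show "AE v in \<rho>. (\<lambda>n. gauss_smoothing g (inverse (Suc n)) v) \<longlonglongrightarrow> g v"
      by (intro AE_I2 gauss_smoothing_tendsto[OF g_cont])
    show "AE v in \<rho>. norm (gauss_smoothing g (inverse (Suc n)) v) \<le> B" for n
      by (intro AE_I2) (simp add: gauss_smoothing_nonneg gauss_smoothing_le)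
  qed auto
qed

lemma integral_eq_if_char_vec_eq:
  fixes \<mu> \<nu> :: "'a measure"
  assumes "finite_measure \<mu>" "sets \<mu> = sets borel" "finite_measure \<nu>" "sets \<nu> = sets borel"
    and "char_vec \<mu> = char_vec \<nu>" and g_cont: "continuous_on UNIV g"
  shows "(\<integral>v. g v \<partial>\<mu>) = (\<integral>v. g v \<partial>\<nu>)"
proof -
  have g_meas [measurable]: "g \<in> borel_measurable borel"
    by (rule borel_measurable_continuous_onI[OF g_cont])
  have smoothed_eq: "(\<integral>v. gauss_smoothing g s v \<partial>\<mu>) = (\<integral>v. gauss_smoothing g s v \<partial>\<nu>)" if "s > 0" for s
  proof -
    have "ennreal (s ^ DIM('a)) * ennreal (\<integral>v. gauss_smoothing g s v \<partial>\<mu>)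
        = ennreal (s ^ DIM('a)) * ennreal (\<integral>v. gauss_smoothing g s v \<partial>\<nu>)"
      unfolding integral_gauss_smoothing_eq_kernel[OF assms(1,2) \<open>s > 0\<close> g_meas]
        integral_gauss_smoothing_eq_kernel[OF assms(3,4) \<open>s > 0\<close> g_meas]
      using integral_gauss_kernel_eq_if_char_vec_eq[OF assms(1-5) \<open>s > 0\<close>] by simp
    moreover have "0 \<le> (\<integral>v. gauss_smoothing g s v \<partial>\<mu>)" "0 \<le> (\<integral>v. gauss_smoothing g s v \<partial>\<nu>)"
      by (auto intro!: integral_nonneg_AE simp: gauss_smoothing_nonneg)
    ultimately show ?thesis
      using \<open>s > 0\<close> by (simp add: ennreal_mult[symmetric] ennreal_inj)
  qed
  have "(\<lambda>n. \<integral>v. gauss_smoothing g (inverse (Suc n)) v \<partial>\<mu>) \<longlonglongrightarrow> (\<integral>v. g v \<partial>\<mu>)"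
    by (rule integral_gauss_smoothing_tendsto[OF assms(1,2) g_cont])
  moreover have "(\<lambda>n. \<integral>v. gauss_smoothing g (inverse (Suc n)) v \<partial>\<mu>) \<longlonglongrightarrow> (\<integral>v. g v \<partial>\<nu>)"
    unfolding smoothed_eq[OF positive_imp_inverse_positive[OF of_nat_0_less_iff[THEN iffD2, OF zero_less_Suc]]]
    by (rule integral_gauss_smoothing_tendsto[OF assms(3,4) g_cont])
  ultimately show ?thesis
    by (rule LIMSEQ_unique)
qed

end

lemma measure_closed_eq_if_char_vec_eq:
  fixes \<mu> \<nu> :: "'a::euclidean_space measure"
  assumes \<mu>: "finite_measure \<mu>" "sets \<mu> = sets borel" and \<nu>: "finite_measure \<nu>" "sets \<nu> = sets borel"
    and char_eq: "char_vec \<mu> = char_vec \<nu>" and "closed F" "F \<noteq> {}"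
  shows "measure \<mu> F = measure \<nu> F"
proof -
  define g where "g n v = max 0 (1 - real (Suc n) * infdist v F)" for n v
  have g_cont: "continuous_on UNIV (g n)" for n
    unfolding g_def by (intro continuous_intros)
  have g_nonneg: "0 \<le> g n v" and g_le_1: "g n v \<le> 1" for n v
    unfolding g_def using infdist_nonneg[of v F] by simp_all
  have g_tendsto: "(\<lambda>n. g n v) \<longlonglongrightarrow> indicator F v" for v
  proof (cases "v \<in> F")
    case True
    then show ?thesis
      using in_closed_iff_infdist_zero[OF \<open>closed F\<close> \<open>F \<noteq> {}\<close>] by (simp add: g_def)
  next
    case False
    then have dist_pos: "infdist v F > 0"
      using in_closed_iff_infdist_zero[OF \<open>closed F\<close> \<open>F \<noteq> {}\<close>] infdist_nonneg[of v F] by simp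
    obtain N :: nat where "1 / infdist v F < real N"
      using reals_Archimedean2 by blast
    then have "1 < real N * infdist v F"
      using dist_pos by (simp add: field_simps)
    moreover have "real N * infdist v F \<le> real (Suc n) * infdist v F" if "N \<le> n" for n
      using that dist_pos by (intro mult_right_mono) auto
    ultimately have "g n v = 0" if "N \<le> n" for n
      using that by (fastforce simp: g_def)
    then have "(\<lambda>n. g n v) \<longlonglongrightarrow> 0"
      by (intro tendsto_eventually eventually_sequentiallyI)
    then show ?thesis
      using False by simp
  qed
  have tendsto_measure: "(\<lambda>n. \<integral>v. g n v \<partial>\<rho>) \<longlonglongrightarrow> measure \<rho> F"
    if "finite_measure \<rho>" and sets_\<rho>: "sets \<rho> = sets borel" for \<rho> :: "'a measure"
  proof -
    interpret finite_measure \<rho> by fact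
    have [measurable_cong]: "sets \<rho> = sets borel" by (rule sets_\<rho>)
    have [measurable]: "g n \<in> borel_measurable borel" for n
      by (rule borel_measurable_continuous_onI[OF g_cont])
    have [measurable]: "F \<in> sets borel"
      using \<open>closed F\<close> by simp
    have "(\<lambda>n. \<integral>v. g n v \<partial>\<rho>) \<longlonglongrightarrow> (\<integral>v. indicator F v \<partial>\<rho>)"
    proof (rule integral_dominated_convergence[where w="\<lambda>_. 1"])
      show "AE v in \<rho>. (\<lambda>n. g n v) \<longlonglongrightarrow> indicator F v"
        by (intro AE_I2 g_tendsto)
      show "AE v in \<rho>. norm (g n v) \<le> 1" for n
        using g_nonneg g_le_1 by (intro AE_I2) (simp add: abs_of_nonneg)
    qed auto
    then show ?thesis
      using sets_\<rho> by (simp add: integral_indicator)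
  qed
  have "(\<integral>v. g n v \<partial>\<mu>) = (\<integral>v. g n v \<partial>\<nu>)" for n
    by (rule integral_eq_if_char_vec_eq[OF g_nonneg g_le_1 \<mu> \<nu> char_eq g_cont])
  then have "(\<lambda>n. \<integral>v. g n v \<partial>\<mu>) \<longlonglongrightarrow> measure \<nu> F"
    using tendsto_measure[OF \<nu>] by simp
  then show ?thesis
    using tendsto_measure[OF \<mu>] LIMSEQ_unique by blast
qed

theorem measure_eq_if_char_vec_eq:
  fixes \<mu> \<nu> :: "'a::euclidean_space measure"
  assumes \<mu>: "finite_measure \<mu>" "sets \<mu> = sets borel" and \<nu>: "finite_measure \<nu>" "sets \<nu> = sets borel"
    and char_eq: "char_vec \<mu> = char_vec \<nu>"
  shows "\<mu> = \<nu>"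
proof (rule measure_eqI_generator_eq[where E="Collect closed" and \<Omega>=UNIV and A="\<lambda>_. UNIV"])
  show "Int_stable (Collect closed :: 'a set set)"
    by (auto simp: Int_stable_def)
  have "sets (borel :: 'a measure) = sigma_sets UNIV (Collect closed)"
    by (subst borel_eq_closed) (simp add: sets_measure_of)
  then show "sets \<mu> = sigma_sets UNIV (Collect closed)" "sets \<nu> = sigma_sets UNIV (Collect closed)"
    using \<mu>(2) \<nu>(2) by auto
  show "emeasure \<mu> UNIV \<noteq> \<infinity>"
    using finite_measure.emeasure_finite[OF \<mu>(1)] by simp
  show "emeasure \<mu> F = emeasure \<nu> F" if "F \<in> Collect closed" for F
  proof (cases "F = {}")
    case False
    then show ?thesis
      using that measure_closed_eq_if_char_vec_eq[OF \<mu> \<nu> char_eq, of F] \<mu>(2) \<nu>(2)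
      by (simp add: finite_measure.emeasure_eq_measure[OF \<mu>(1)] finite_measure.emeasure_eq_measure[OF \<nu>(1)])
  qed simp
qed auto

section \<open>Isotropic Gaussian vectors\<close>

lemma std_normal_vec_eq_density: "std_normal_vec = density lborel (std_normal_pdf :: real^'p \<Rightarrow> real)"
proof -
  have inj: "inj (\<lambda>i::'p. axis i (1::real))"
    by (auto simp: inj_def axis_eq_axis)
  have Basis_eq: "(Basis :: (real^'p) set) = range (\<lambda>i. axis i 1)"
    by (auto simp: Basis_vec_def)
  have "std_normal_pdf v = (\<Prod>k\<in>UNIV. std_normal_density (v $ k))" for v :: "real^'p"
    unfolding std_normal_pdf_def Basis_eq prod.reindex[OF inj] by (simp add: inner_axis)
  then show ?thesis
    unfolding std_normal_vec_def by simp
qed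

lemma prob_space_std_normal_vec: "prob_space (std_normal_vec :: (real^'p) measure)"
  by (rule prob_spaceI) (simp add: std_normal_vec_eq_density emeasure_density nn_integral_std_normal_pdf)

lemma integral_iexp_normal_law:
  assumes "0 \<le> v"
  shows "(\<integral>u. iexp u \<partial>normal_law 0 v) = complex_of_real (exp (- v / 2))"
proof (cases "v = 0")
  case True
  then show ?thesis
    by (simp add: normal_law_def integral_return)
next
  case False
  define \<sigma> where "\<sigma> = sqrt v"
  have "\<sigma> > 0"
    using False assms by (simp add: \<sigma>_def)
  have density: "\<bar>\<sigma>\<bar> * normal_density 0 \<sigma> (0 + \<sigma> * y) = std_normal_density y" for y
    using \<open>\<sigma> > 0\<close> by (simp add: normal_density_def real_sqrt_mult power2_eq_square field_simps)
  have "(\<integral>u. iexp u \<partial>normal_law 0 v) = (\<integral>u. normal_density 0 \<sigma> u *\<^sub>R iexp u \<partial>lborel)"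
    using False by (simp add: normal_law_def \<sigma>_def integral_density)
  also have "\<dots> = \<bar>\<sigma>\<bar> *\<^sub>R (\<integral>y. normal_density 0 \<sigma> (0 + \<sigma> * y) *\<^sub>R iexp (0 + \<sigma> * y) \<partial>lborel)"
    using \<open>\<sigma> > 0\<close> by (intro lborel_integral_real_affine) simp
  also have "\<dots> = (\<integral>y. std_normal_density y *\<^sub>R iexp (\<sigma> * y) \<partial>lborel)"
    unfolding integral_scaleR_right[symmetric] scaleR_scaleR density by simp
  also have "\<dots> = complex_of_real (exp (- (\<sigma>\<^sup>2) / 2))"
    by (rule integral_std_normal_density_iexp)
  finally show ?thesis
    using assms by (simp add: \<sigma>_def)
qed

lemma integrable_normal_law:
  fixes W :: "'s \<Rightarrow> real"
  assumes [measurable]: "W \<in> borel_measurable M" and "distr M borel W = normal_law 0 v" and "v > 0"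
  shows "integrable M W"
proof -
  have "integrable (distr M borel W) (\<lambda>u. u)"
    using assms(2,3) by (simp add: normal_law_def integrable_density integrable_normal_moment_nz_1)
  then show ?thesis
    by (subst (asm) integrable_distr_eq) auto
qed

lemma char_vec_distr:
  fixes V :: "'s \<Rightarrow> 'a::euclidean_space"
  assumes [measurable]: "V \<in> borel_measurable M"
  shows "char_vec (distr M borel V) t = (\<integral>u. iexp u \<partial>distr M borel (\<lambda>\<omega>. t \<bullet> V \<omega>))"
  unfolding char_vec_def by (simp add: integral_distr)

lemma char_vec_scaled_std_normal_vec:
  "char_vec (distr std_normal_vec borel (\<lambda>v::real^'p. r *\<^sub>R v)) t = complex_of_real (exp (- (r\<^sup>2 * (t \<bullet> t)) / 2))"
proof -
  have "char_vec (distr std_normal_vec borel (\<lambda>v::real^'p. r *\<^sub>R v)) t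
      = (\<integral>v. std_normal_pdf v *\<^sub>R iexp ((r *\<^sub>R t) \<bullet> v) \<partial>(lborel::(real^'p) measure))"
    unfolding char_vec_def std_normal_vec_eq_density
    by (subst integral_distr) (auto simp: integral_density std_normal_pdf_nonneg)
  also have "\<dots> = complex_of_real (exp (- ((r *\<^sub>R t) \<bullet> (r *\<^sub>R t)) / 2))"
    by (rule fourier_std_normal_pdf)
  finally show ?thesis
    by (simp add: power2_eq_square)
qed

definition centred_isotropic_normal :: "'s measure \<Rightarrow> ('s \<Rightarrow> real^'p) \<Rightarrow> real \<Rightarrow> bool" where
  "centred_isotropic_normal M V c \<longleftrightarrow>
     V \<in> borel_measurable M \<and> (\<forall>a. distr M borel (\<lambda>\<omega>. a \<bullet> V \<omega>) = normal_law 0 (c * (a \<bullet> a)))"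

lemma jointly_normal_cov_imp_centred_isotropic_normal:
  assumes "jointly_normal_cov M X Y x y z"
  shows "centred_isotropic_normal M X x" "centred_isotropic_normal M Y y"
proof -
  have law: "distr M borel (\<lambda>\<omega>. a \<bullet> X \<omega> + b \<bullet> Y \<omega>)
      = normal_law 0 (x * (a \<bullet> a) + 2 * z * (a \<bullet> b) + y * (b \<bullet> b))" for a b
    using assms unfolding jointly_normal_cov_def by blast
  show "centred_isotropic_normal M X x" "centred_isotropic_normal M Y y"
    using assms law[of _ 0] law[of 0] unfolding jointly_normal_cov_def centred_isotropic_normal_def
    by simp_all
qed

lemma distr_centred_isotropic_normal:
  fixes V :: "'s \<Rightarrow> real^'p"
  assumes "prob_space M" and "c > 0" and V: "centred_isotropic_normal M V c"
  shows "distr M borel V = distr std_normal_vec borel (\<lambda>v. sqrt c *\<^sub>R v)"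
proof (rule measure_eq_if_char_vec_eq)
  have [measurable]: "V \<in> borel_measurable M"
    using V unfolding centred_isotropic_normal_def by blast
  show "finite_measure (distr M borel V)"
    using prob_space.prob_space_distr[OF \<open>prob_space M\<close> \<open>V \<in> borel_measurable M\<close>]
    unfolding prob_space_def by blast
  show "finite_measure (distr std_normal_vec borel (\<lambda>v::real^'p. sqrt c *\<^sub>R v))"
    using prob_space.prob_space_distr[OF prob_space_std_normal_vec, of "\<lambda>v::real^'p. sqrt c *\<^sub>R v" borel]
    unfolding prob_space_def by (auto simp: std_normal_vec_eq_density)
  show "char_vec (distr M borel V) = char_vec (distr std_normal_vec borel (\<lambda>v. sqrt c *\<^sub>R v))"
  proof
    fix t :: "real^'p"
    have "char_vec (distr M borel V) t = complex_of_real (exp (- (c * (t \<bullet> t)) / 2))"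
      using V \<open>c > 0\<close> unfolding char_vec_distr[OF \<open>V \<in> borel_measurable M\<close>] centred_isotropic_normal_def
      by (simp add: integral_iexp_normal_law)
    then show "char_vec (distr M borel V) t = char_vec (distr std_normal_vec borel (\<lambda>v. sqrt c *\<^sub>R v)) t"
      using \<open>c > 0\<close> by (simp add: char_vec_scaled_std_normal_vec)
  qed
qed simp_all

lemma borel_measurable_vec_nth [measurable (raw)]:
  "X \<in> borel_measurable M \<Longrightarrow> (\<lambda>\<omega>. X \<omega> $ k :: real) \<in> borel_measurable M"
  by (rule measurable_compose[OF _ borel_measurable_nth])

lemma integrable_vec_nth_centred_isotropic_normal:
  assumes "c > 0" and V: "centred_isotropic_normal M V c"
  shows "integrable M (\<lambda>\<omega>. V \<omega> $ k)"
proof (rule integrable_normal_law[OF _ _ \<open>c > 0\<close>])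
  have [measurable]: "V \<in> borel_measurable M"
    using V unfolding centred_isotropic_normal_def by blast
  show "(\<lambda>\<omega>. V \<omega> $ k) \<in> borel_measurable M"
    by measurable
  show "distr M borel (\<lambda>\<omega>. V \<omega> $ k) = normal_law 0 c"
    using V[unfolded centred_isotropic_normal_def] by (auto dest: spec[of _ "axis k 1"] simp: inner_axis' inner_axis_axis)
qed

section \<open>Largest coordinate\<close>

lemma vec_nth_le_vmax: "v $ j \<le> vmax v"
  unfolding vmax_def by (rule Max_ge) auto

lemma vmax_attained: "\<exists>k. v $ k = vmax v"
proof -
  have "vmax v \<in> range (\<lambda>k. v $ k)"
    unfolding vmax_def by (rule Max_in) auto
  then show ?thesis
    by auto
qed

lemma vec_nth_vargmax: "v $ vargmax v = vmax v"
proof -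
  obtain k where k: "v $ k = vmax v"
    using vmax_attained by blast
  then have "\<forall>j. v $ j \<le> v $ k"
    by (simp add: vec_nth_le_vmax)
  then have "\<forall>j. v $ j \<le> v $ vargmax v"
    unfolding vargmax_def by (rule someI)
  then show ?thesis
    using k vec_nth_le_vmax by (metis order.antisym)
qed

lemma vmax_scaleR:
  assumes "0 \<le> r"
  shows "vmax (r *\<^sub>R v) = r * vmax v"
proof (rule order.antisym)
  obtain k where "(r *\<^sub>R v) $ k = vmax (r *\<^sub>R v)"
    using vmax_attained by blast
  then show "vmax (r *\<^sub>R v) \<le> r * vmax v"
    using mult_left_mono[OF vec_nth_le_vmax[of v k] assms] by simp
  show "r * vmax v \<le> vmax (r *\<^sub>R v)"
    using vec_nth_le_vmax[of "r *\<^sub>R v" "vargmax v"] by (simp add: vec_nth_vargmax)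
qed

lemma abs_vec_nth_le_sum_abs: "\<bar>(v::real^'p) $ k\<bar> \<le> (\<Sum>j\<in>UNIV. \<bar>v $ j\<bar>)"
  by (rule member_le_sum[where f="\<lambda>j. \<bar>v $ j\<bar>"]) auto

lemma abs_vmax_le_sum_abs: "\<bar>vmax v\<bar> \<le> (\<Sum>j\<in>UNIV. \<bar>v $ j\<bar>)"
  using abs_vec_nth_le_sum_abs[of v "vargmax v"] by (simp add: vec_nth_vargmax)

lemma borel_measurable_vmax [measurable]: "vmax \<in> borel_measurable borel"
  unfolding vmax_def by measurable

lemma measurable_vargmax [measurable]: "(vargmax :: real^'p \<Rightarrow> 'p) \<in> borel \<rightarrow>\<^sub>M count_space UNIV"
proof -
  define A where "A k = {v::real^'p. \<forall>j. v $ j \<le> v $ k}" for k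
  define S where "S v = {k. v \<in> A k}" for v :: "real^'p"
  have vargmax_eq: "vargmax = (\<lambda>T. SOME k. k \<in> T) \<circ> S"
    by (auto simp: vargmax_def S_def A_def fun_eq_iff)
  have A_closed: "closed (A k)" for k
    unfolding A_def Collect_all_eq
    by (intro closed_INT ballI closed_Collect_le continuous_on_component continuous_on_id)
  have "S \<in> borel \<rightarrow>\<^sub>M count_space UNIV"
    unfolding measurable_count_space_eq2_countable
  proof (intro conjI ballI)
    fix T :: "'p set"
    have "S -` {T} \<inter> space borel = (\<Inter>k\<in>T. A k) \<inter> (\<Inter>k\<in>-T. UNIV - A k)"
      unfolding S_def by auto
    also have "\<dots> \<in> sets borel"
      using A_closed by (intro sets.Int sets.countable_INT'') auto
    finally show "S -` {T} \<inter> space borel \<in> sets borel" .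
  qed auto
  then show ?thesis
    unfolding vargmax_eq by (rule measurable_comp) simp
qed

lemma borel_measurable_vec_nth_vargmax [measurable]:
  fixes X Y :: "'s \<Rightarrow> real^'p"
  assumes [measurable]: "X \<in> borel_measurable M" "Y \<in> borel_measurable M"
  shows "(\<lambda>\<omega>. Y \<omega> $ vargmax (X \<omega>)) \<in> borel_measurable M"
  by (rule measurable_compose_countable[where g="\<lambda>\<omega>. vargmax (X \<omega>)"]) measurable

lemma integral_vmax_centred_isotropic_normal:
  fixes V :: "'s \<Rightarrow> real^'p"
  assumes "prob_space M" and "c > 0" and V: "centred_isotropic_normal M V c"
  shows "(\<integral>\<omega>. vmax (V \<omega>) \<partial>M) = sqrt c * (\<integral>v. vmax v \<partial>(std_normal_vec :: (real^'p) measure))"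
proof -
  have [measurable]: "V \<in> borel_measurable M"
    using V unfolding centred_isotropic_normal_def by blast
  have "(\<integral>\<omega>. vmax (V \<omega>) \<partial>M) = (\<integral>v. vmax v \<partial>distr M borel V)"
    by (simp add: integral_distr)
  also have "\<dots> = (\<integral>v. vmax (sqrt c *\<^sub>R v) \<partial>(std_normal_vec :: (real^'p) measure))"
    unfolding distr_centred_isotropic_normal[OF assms]
    by (subst integral_distr) (auto simp: std_normal_vec_eq_density)
  finally show ?thesis
    using \<open>c > 0\<close> by (simp add: vmax_scaleR)
qed

lemma jointly_normal_cov_reflect:
  fixes X Y :: "'s \<Rightarrow> real^'p"
  assumes "prob_space M" and "x > 0" and XY: "jointly_normal_cov M X Y x y z"
  shows "distr M borel (\<lambda>\<omega>. (X \<omega>, Y \<omega>)) = distr M borel (\<lambda>\<omega>. (X \<omega>, (2 * z / x) *\<^sub>R X \<omega> - Y \<omega>))"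
    (is "distr M borel ?XY = distr M borel ?XY'")
proof (rule measure_eq_if_char_vec_eq)
  interpret prob_space M by fact
  have [measurable]: "X \<in> borel_measurable M" "Y \<in> borel_measurable M"
    and law: "\<And>a b. distr M borel (\<lambda>\<omega>. a \<bullet> X \<omega> + b \<bullet> Y \<omega>)
                  = normal_law 0 (x * (a \<bullet> a) + 2 * z * (a \<bullet> b) + y * (b \<bullet> b))"
    using XY unfolding jointly_normal_cov_def by auto
  show "finite_measure (distr M borel ?XY)" "finite_measure (distr M borel ?XY')"
    using prob_space_distr[of ?XY borel] prob_space_distr[of ?XY' borel]
    unfolding prob_space_def by auto
  show "char_vec (distr M borel ?XY) = char_vec (distr M borel ?XY')"
  proof
    fix t :: "(real^'p) \<times> (real^'p)"
    obtain a b where t: "t = (a, b)"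
      by (cases t)
    let ?a' = "a + (2 * z / x) *\<^sub>R b"
    have "(\<lambda>\<omega>. t \<bullet> ?XY \<omega>) = (\<lambda>\<omega>. a \<bullet> X \<omega> + b \<bullet> Y \<omega>)"
      by (simp add: t)
    moreover have "(\<lambda>\<omega>. t \<bullet> ?XY' \<omega>) = (\<lambda>\<omega>. ?a' \<bullet> X \<omega> + (- b) \<bullet> Y \<omega>)"
      by (auto simp: t inner_add_left inner_diff_right inner_commute[of b] fun_eq_iff)
    moreover have "x * (?a' \<bullet> ?a') + 2 * z * (?a' \<bullet> - b) + y * (- b \<bullet> - b)
        = x * (a \<bullet> a) + 2 * z * (a \<bullet> b) + y * (b \<bullet> b)"
      using \<open>x > 0\<close> by (simp add: inner_add_left inner_add_right inner_commute[of b a] field_simps)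
    moreover have "?XY \<in> borel_measurable M" "?XY' \<in> borel_measurable M"
      by measurable
    ultimately show "char_vec (distr M borel ?XY) t = char_vec (distr M borel ?XY') t"
      by (simp only: char_vec_distr law)
  qed
qed simp_all

lemma integral_vec_nth_vargmax:
  fixes X Y :: "'s \<Rightarrow> real^'p"
  assumes "prob_space M" and "x > 0" and "y > 0" and XY: "jointly_normal_cov M X Y x y z"
  shows "(\<integral>\<omega>. Y \<omega> $ vargmax (X \<omega>) \<partial>M) = z / x * (\<integral>\<omega>. vmax (X \<omega>) \<partial>M)"
proof -
  interpret prob_space M by fact
  have X: "centred_isotropic_normal M X x" and Y: "centred_isotropic_normal M Y y"
    using jointly_normal_cov_imp_centred_isotropic_normal[OF XY] by auto
  have [measurable]: "X \<in> borel_measurable M" "Y \<in> borel_measurable M"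
    using XY unfolding jointly_normal_cov_def by auto
  have sum_X: "integrable M (\<lambda>\<omega>. \<Sum>j\<in>UNIV. \<bar>X \<omega> $ j\<bar>)"
    and sum_Y: "integrable M (\<lambda>\<omega>. \<Sum>j\<in>UNIV. \<bar>Y \<omega> $ j\<bar>)"
    using integrable_vec_nth_centred_isotropic_normal[OF \<open>x > 0\<close> X]
      integrable_vec_nth_centred_isotropic_normal[OF \<open>y > 0\<close> Y] by auto
  have int_vmax: "integrable M (\<lambda>\<omega>. vmax (X \<omega>))"
  proof (rule Bochner_Integration.integrable_bound[OF sum_X])
    show "AE \<omega> in M. norm (vmax (X \<omega>)) \<le> norm (\<Sum>j\<in>UNIV. \<bar>X \<omega> $ j\<bar>)"
      by (intro AE_I2) (simp add: abs_vmax_le_sum_abs)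
  qed measurable
  have int_argmax: "integrable M (\<lambda>\<omega>. Y \<omega> $ vargmax (X \<omega>))"
  proof (rule Bochner_Integration.integrable_bound[OF sum_Y])
    show "AE \<omega> in M. norm (Y \<omega> $ vargmax (X \<omega>)) \<le> norm (\<Sum>j\<in>UNIV. \<bar>Y \<omega> $ j\<bar>)"
      by (intro AE_I2) (simp add: abs_vec_nth_le_sum_abs)
  qed measurable
  have argmax_meas: "(\<lambda>p::(real^'p) \<times> (real^'p). snd p $ vargmax (fst p)) \<in> borel_measurable borel"
    by (intro borel_measurable_vec_nth_vargmax borel_measurable_continuous_onI continuous_intros)
  let ?I = "\<integral>\<omega>. Y \<omega> $ vargmax (X \<omega>) \<partial>M"
  have "?I = (\<integral>p. snd p $ vargmax (fst p) \<partial>distr M borel (\<lambda>\<omega>. (X \<omega>, Y \<omega>)))"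
    by (simp add: integral_distr[OF _ argmax_meas])
  also have "\<dots> = (\<integral>p. snd p $ vargmax (fst p) \<partial>distr M borel (\<lambda>\<omega>. (X \<omega>, (2 * z / x) *\<^sub>R X \<omega> - Y \<omega>)))"
    by (simp only: jointly_normal_cov_reflect[OF assms(1,2) XY])
  also have "\<dots> = (\<integral>\<omega>. 2 * z / x * vmax (X \<omega>) - Y \<omega> $ vargmax (X \<omega>) \<partial>M)"
    by (simp add: integral_distr[OF _ argmax_meas] vec_nth_vargmax)
  also have "\<dots> = 2 * z / x * (\<integral>\<omega>. vmax (X \<omega>) \<partial>M) - ?I"
    using int_vmax int_argmax by simp
  finally show ?thesis
    by simp
qed

theorem mainTheorem3:
  fixes M :: "'s measure" and X Y :: "'s \<Rightarrow> real^'p" and x y z :: real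
  assumes "prob_space M"
    and "x > 0" and "y > 0"
    and "jointly_normal_cov M X Y x y z"
  shows "(\<integral>\<omega>. Y \<omega> $ vargmax (X \<omega>) \<partial>M) = z / x * (\<integral>\<omega>. vmax (X \<omega>) \<partial>M)
       \<and> z / x * (\<integral>\<omega>. vmax (X \<omega>) \<partial>M) = z / sqrt x * (\<integral>v. vmax v \<partial>(std_normal_vec :: (real^'p) measure))
       \<and> z / sqrt x * (\<integral>v. vmax v \<partial>(std_normal_vec :: (real^'p) measure))
           = z / sqrt (x * y) * (\<integral>\<omega>. vmax (Y \<omega>) \<partial>M)"
proof -
  define S where "S = (\<integral>v. vmax v \<partial>(std_normal_vec :: (real^'p) measure))"
  have X: "centred_isotropic_normal M X x" and Y: "centred_isotropic_normal M Y y"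
    using jointly_normal_cov_imp_centred_isotropic_normal[OF assms(4)] by auto
  have "z / x * (sqrt x * S) = z / (sqrt x * sqrt x) * (sqrt x * S)"
    using assms(2) by simp
  then have scale_x: "z / x * (sqrt x * S) = z / sqrt x * S"
    using assms(2) by (simp add: field_simps)
  have scale_xy: "z / sqrt x * S = z / sqrt (x * y) * (sqrt y * S)"
    using assms(3) by (simp add: real_sqrt_mult)
  show ?thesis
    unfolding integral_vec_nth_vargmax[OF assms] S_def[symmetric]
      integral_vmax_centred_isotropic_normal[OF assms(1,2) X] integral_vmax_centred_isotropic_normal[OF assms(1,3) Y]
      scale_x scale_xy
    by simp
qed

end
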